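(* Let $\Lambda$ be a row-finite $k$-graph with no sources, and let $\mu,\nu\in\Lambda$ with $s(\mu)=s(\nu)$. Then $\mu\sim\nu$ if and only if $\mathrm{MCE}(\mu\tau,\nu\tau)\ne\emptyset$ for every $\tau\in s(\mu)\Lambda$.
   Context: $k$-graph notation: countable category $\Lambda$, degree functor $d:\Lambda\to\mathbb N^k$ with unique factorisation, $\Lambda^n=d^{-1}(n)$, vertices $\Lambda^0$, range/source $r,s$, $v\Lambda^n=\{\lambda\in\Lambda^n:r(\lambda)=v\}$. Row-finite: every $v\Lambda^n$ is finite; no sources: every $v\Lambda^n$ is nonempty. $\mathrm{MCE}(\mu,\nu)=\{\lambda\in\Lambda^{d(\mu)\vee d(\nu)}:\lambda=\mu\alpha=\nu\beta\text{ for some }\alpha,\beta\}$. A filter is a nonempty $S\subseteq\Lambda$ with (F1) $\lambda\Lambda\cap S\ne\emptyset\Rightarrow\lambda\in S$ and (F2) $\mu,\nu\in S\Rightarrow\mathrm{MCE}(\mu,\nu)\cap S\ne\emptyset$; $r(S)$ denotes the unique vertex in $S$. An ultrafilter is a filter with $S\cap\Lambda^n\ne\emptyset$ for all $n\in\mathbb N^k$. For an ultrafilter $S$ and $\mu$ with $s(\mu)=r(S)$, $\ell_\mu(S)=\{\eta\in\Lambda:\eta\Lambda\cap\mu S\ne\emptyset\}$ (again an ultrafilter). For $\mu,\nu$ with $s(\mu)=s(\nu)$, $\mu\sim\nu$ means $\ell_\mu(S)=\ell_\nu(S)$ for every ultrafilter $S$ with $r(S)=s(\mu)$. *)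

theory Defs
  imports Main "HOL-Library.Countable_Set"
begin

text \<open>A k-graph is modelled as a category whose morphisms form a set Mor of
elements of an ambient type; objects are identified with identity morphisms
(the vertices). Degrees in N^k are modelled as functions nat => nat vanishing
at all i >= k, ordered pointwise.\<close>

record 'a kgraph =
  Mor :: "'a set"
  rng :: "'a \<Rightarrow> 'a"
  src :: "'a \<Rightarrow> 'a"
  cmp :: "'a \<Rightarrow> 'a \<Rightarrow> 'a"
  deg :: "'a \<Rightarrow> nat \<Rightarrow> nat"

definition NK :: "nat \<Rightarrow> (nat \<Rightarrow> nat) set" where
  "NK k = {n. \<forall>i\<ge>k. n i = 0}"

definition vertices :: "'a kgraph \<Rightarrow> 'a set" where
  "vertices L = rng L ` Mor L \<union> src L ` Mor L"

definition is_kgraph :: "nat \<Rightarrow> 'a kgraph \<Rightarrow> bool" where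
  "is_kgraph k L \<longleftrightarrow>
     countable (Mor L) \<and>
     (\<forall>l\<in>Mor L. rng L l \<in> Mor L \<and> src L l \<in> Mor L) \<and>
     (\<forall>v\<in>vertices L. rng L v = v \<and> src L v = v) \<and>
     (\<forall>l\<in>Mor L. \<forall>m\<in>Mor L. src L l = rng L m \<longrightarrow>
        cmp L l m \<in> Mor L \<and> rng L (cmp L l m) = rng L l \<and> src L (cmp L l m) = src L m) \<and>
     (\<forall>l\<in>Mor L. cmp L (rng L l) l = l \<and> cmp L l (src L l) = l) \<and>
     (\<forall>l\<in>Mor L. \<forall>m\<in>Mor L. \<forall>n\<in>Mor L. src L l = rng L m \<longrightarrow> src L m = rng L n \<longrightarrow>
        cmp L (cmp L l m) n = cmp L l (cmp L m n)) \<and>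
     (\<forall>l\<in>Mor L. deg L l \<in> NK k) \<and>
     (\<forall>l\<in>Mor L. \<forall>m\<in>Mor L. src L l = rng L m \<longrightarrow>
        deg L (cmp L l m) = (\<lambda>i. deg L l i + deg L m i)) \<and>
     (\<forall>l\<in>Mor L. \<forall>m n. deg L l = (\<lambda>i. m i + n i) \<longrightarrow>
        (\<exists>!p. fst p \<in> Mor L \<and> snd p \<in> Mor L \<and> src L (fst p) = rng L (snd p) \<and>
              cmp L (fst p) (snd p) = l \<and> deg L (fst p) = m \<and> deg L (snd p) = n))"

definition vLn :: "'a kgraph \<Rightarrow> 'a \<Rightarrow> (nat \<Rightarrow> nat) \<Rightarrow> 'a set" where
  "vLn L v n = {l \<in> Mor L. rng L l = v \<and> deg L l = n}"

definition row_finite :: "nat \<Rightarrow> 'a kgraph \<Rightarrow> bool" where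
  "row_finite k L \<longleftrightarrow> (\<forall>v\<in>vertices L. \<forall>n\<in>NK k. finite (vLn L v n))"

definition no_sources :: "nat \<Rightarrow> 'a kgraph \<Rightarrow> bool" where
  "no_sources k L \<longleftrightarrow> (\<forall>v\<in>vertices L. \<forall>n\<in>NK k. vLn L v n \<noteq> {})"

definition extensions :: "'a kgraph \<Rightarrow> 'a \<Rightarrow> 'a set" where
  "extensions L l = {cmp L l a | a. a \<in> Mor L \<and> src L l = rng L a}"

definition MCE :: "'a kgraph \<Rightarrow> 'a \<Rightarrow> 'a \<Rightarrow> 'a set" where
  "MCE L m n = {l \<in> Mor L. deg L l = (\<lambda>i. max (deg L m i) (deg L n i)) \<and>
      (\<exists>a\<in>Mor L. src L m = rng L a \<and> l = cmp L m a) \<and>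
      (\<exists>b\<in>Mor L. src L n = rng L b \<and> l = cmp L n b)}"

definition is_filter :: "'a kgraph \<Rightarrow> 'a set \<Rightarrow> bool" where
  "is_filter L S \<longleftrightarrow> S \<subseteq> Mor L \<and> S \<noteq> {} \<and>
     (\<forall>l\<in>Mor L. extensions L l \<inter> S \<noteq> {} \<longrightarrow> l \<in> S) \<and>
     (\<forall>m\<in>S. \<forall>n\<in>S. MCE L m n \<inter> S \<noteq> {})"

definition is_ultrafilter :: "nat \<Rightarrow> 'a kgraph \<Rightarrow> 'a set \<Rightarrow> bool" where
  "is_ultrafilter k L S \<longleftrightarrow> is_filter L S \<and>
     (\<forall>n\<in>NK k. S \<inter> {l \<in> Mor L. deg L l = n} \<noteq> {})"

definition rS :: "'a kgraph \<Rightarrow> 'a set \<Rightarrow> 'a" where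
  "rS L S = (THE v. v \<in> S \<and> v \<in> vertices L)"

definition ell :: "'a kgraph \<Rightarrow> 'a \<Rightarrow> 'a set \<Rightarrow> 'a set" where
  "ell L m S = {e \<in> Mor L. extensions L e \<inter> (cmp L m ` S) \<noteq> {}}"

definition sim :: "nat \<Rightarrow> 'a kgraph \<Rightarrow> 'a \<Rightarrow> 'a \<Rightarrow> bool" where
  "sim k L m n \<longleftrightarrow> (\<forall>S. is_ultrafilter k L S \<and> rS L S = src L m \<longrightarrow> ell L m S = ell L n S)"

end

theory Submission
  imports Defs
begin

(* Write x \<preceq> y ("x is a prefix of y") when y = x a for some path a.
   By unique factorisation, the prefixes of a fixed path y are determined by their
   degrees, and any two prefixes x, x' of y have a minimal common extension which is
   again a prefix of y (the prefix of degree d(x) \<or> d(x')).  An element \<eta> lies in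
   \<ell>_\<mu>(S) iff \<eta> \<preceq> \<mu>\<sigma> for some \<sigma> \<in> S.

   (\<Leftarrow>) Given \<eta> \<preceq> \<mu>\<sigma> with \<sigma> \<in> S, use that S is an ultrafilter to enlarge \<sigma> to
   \<rho> \<in> S with d(\<rho>) \<ge> d(\<eta>).  The hypothesis gives \<kappa> \<in> MCE(\<mu>\<rho>, \<nu>\<rho>); then \<eta> and \<nu>\<rho>
   are both prefixes of \<kappa>, and comparing degrees shows \<eta> \<preceq> \<nu>\<rho>, i.e. \<eta> \<in> \<ell>_\<nu>(S).
   (\<Rightarrow>) Since \<Lambda> has no sources, every \<tau> extends to an infinite chain whose prefixes
   form an ultrafilter S containing \<tau>.  Then \<mu>\<tau> \<in> \<ell>_\<mu>(S) = \<ell>_\<nu>(S), so \<mu>\<tau> \<preceq> \<nu>\<sigma> with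
   \<sigma> \<in> S; a common extension \<rho> \<in> S of \<sigma> and \<tau> makes \<mu>\<tau> and \<nu>\<tau> prefixes of \<nu>\<rho>, and
   hence they have a minimal common extension. *)

locale k_graph =
  fixes k :: nat and L :: "'a kgraph"
  assumes kg: "is_kgraph k L"
begin

lemma rng_mor: "l \<in> Mor L \<Longrightarrow> rng L l \<in> Mor L"
  using kg unfolding is_kgraph_def by blast

lemma src_mor: "l \<in> Mor L \<Longrightarrow> src L l \<in> Mor L"
  using kg unfolding is_kgraph_def by blast

lemma vertex_rng: "v \<in> vertices L \<Longrightarrow> rng L v = v"
  using kg unfolding is_kgraph_def by blast

lemma vertex_src: "v \<in> vertices L \<Longrightarrow> src L v = v"
  using kg unfolding is_kgraph_def by blast

lemma rng_vertex: "l \<in> Mor L \<Longrightarrow> rng L l \<in> vertices L"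
  unfolding vertices_def by blast

lemma src_vertex: "l \<in> Mor L \<Longrightarrow> src L l \<in> vertices L"
  unfolding vertices_def by blast

lemma cmp_mor: "l \<in> Mor L \<Longrightarrow> m \<in> Mor L \<Longrightarrow> src L l = rng L m \<Longrightarrow> cmp L l m \<in> Mor L"
  using kg unfolding is_kgraph_def by blast

lemma cmp_rng: "l \<in> Mor L \<Longrightarrow> m \<in> Mor L \<Longrightarrow> src L l = rng L m \<Longrightarrow> rng L (cmp L l m) = rng L l"
  using kg unfolding is_kgraph_def by blast

lemma cmp_src: "l \<in> Mor L \<Longrightarrow> m \<in> Mor L \<Longrightarrow> src L l = rng L m \<Longrightarrow> src L (cmp L l m) = src L m"
  using kg unfolding is_kgraph_def by blast

lemma cmp_right_id: "l \<in> Mor L \<Longrightarrow> cmp L l (src L l) = l"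
  using kg unfolding is_kgraph_def by blast

lemma cmp_left_id: "l \<in> Mor L \<Longrightarrow> cmp L (rng L l) l = l"
  using kg unfolding is_kgraph_def by blast

lemma cmp_assoc:
  "l \<in> Mor L \<Longrightarrow> m \<in> Mor L \<Longrightarrow> n \<in> Mor L \<Longrightarrow> src L l = rng L m \<Longrightarrow> src L m = rng L n \<Longrightarrow>
     cmp L (cmp L l m) n = cmp L l (cmp L m n)"
  using kg unfolding is_kgraph_def by blast

lemma deg_NK: "l \<in> Mor L \<Longrightarrow> deg L l \<in> NK k"
  using kg unfolding is_kgraph_def by blast

lemma deg_cmp: "l \<in> Mor L \<Longrightarrow> m \<in> Mor L \<Longrightarrow> src L l = rng L m \<Longrightarrow>
     deg L (cmp L l m) = (\<lambda>i. deg L l i + deg L m i)"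
  using kg unfolding is_kgraph_def by blast

lemma factorisation_exists:
  assumes "l \<in> Mor L" "deg L l = (\<lambda>i. m i + n i)"
  shows "\<exists>a b. a \<in> Mor L \<and> b \<in> Mor L \<and> src L a = rng L b \<and> cmp L a b = l \<and> deg L a = m \<and> deg L b = n"
proof -
  have "\<exists>p. fst p \<in> Mor L \<and> snd p \<in> Mor L \<and> src L (fst p) = rng L (snd p) \<and>
              cmp L (fst p) (snd p) = l \<and> deg L (fst p) = m \<and> deg L (snd p) = n"
    using kg assms unfolding is_kgraph_def by blast
  then show ?thesis by blast
qed

lemma factorisation_unique:
  assumes "l \<in> Mor L" "deg L l = (\<lambda>i. m i + n i)"
    and "a \<in> Mor L" "b \<in> Mor L" "src L a = rng L b" "cmp L a b = l" "deg L a = m" "deg L b = n"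
    and "a' \<in> Mor L" "b' \<in> Mor L" "src L a' = rng L b'" "cmp L a' b' = l" "deg L a' = m" "deg L b' = n"
  shows "a = a'"
proof -
  have "\<exists>!p. fst p \<in> Mor L \<and> snd p \<in> Mor L \<and> src L (fst p) = rng L (snd p) \<and>
              cmp L (fst p) (snd p) = l \<and> deg L (fst p) = m \<and> deg L (snd p) = n"
    using kg assms(1,2) unfolding is_kgraph_def by blast
  then have "(a, b) = (a', b')" using assms by (metis fst_conv snd_conv)
  then show ?thesis by simp
qed

subsection \<open>The prefix order\<close>

definition prefix :: "'a \<Rightarrow> 'a \<Rightarrow> bool" where
  "prefix x y \<longleftrightarrow> x \<in> Mor L \<and> (\<exists>a\<in>Mor L. src L x = rng L a \<and> y = cmp L x a)"

lemma prefix_refl: "x \<in> Mor L \<Longrightarrow> prefix x x"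
  unfolding prefix_def using src_mor src_vertex vertex_rng cmp_right_id by metis

lemma prefix_mor_left: "prefix x y \<Longrightarrow> x \<in> Mor L"
  unfolding prefix_def by auto

lemma prefix_mor_right: "prefix x y \<Longrightarrow> y \<in> Mor L"
  unfolding prefix_def using cmp_mor by auto

lemma prefix_cmp: "x \<in> Mor L \<Longrightarrow> a \<in> Mor L \<Longrightarrow> src L x = rng L a \<Longrightarrow> prefix x (cmp L x a)"
  unfolding prefix_def by auto

lemma prefix_trans:
  assumes "prefix x y" "prefix y z"
  shows "prefix x z"
proof -
  obtain a where a: "x \<in> Mor L" "a \<in> Mor L" "src L x = rng L a" "y = cmp L x a"
    using assms(1) unfolding prefix_def by auto
  obtain b where b: "b \<in> Mor L" "src L y = rng L b" "z = cmp L y b"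
    using assms(2) unfolding prefix_def by auto
  have ab: "src L a = rng L b" using a b cmp_src by auto
  have "z = cmp L x (cmp L a b)" using a b ab cmp_assoc by auto
  moreover have "cmp L a b \<in> Mor L" "rng L (cmp L a b) = src L x"
    using a b ab cmp_mor cmp_rng by auto
  ultimately show ?thesis using a unfolding prefix_def by metis
qed

lemma prefix_cmp_left:
  assumes "prefix \<sigma> \<rho>" "\<mu> \<in> Mor L" "src L \<mu> = rng L \<sigma>"
  shows "prefix (cmp L \<mu> \<sigma>) (cmp L \<mu> \<rho>)"
proof -
  obtain a where a: "\<sigma> \<in> Mor L" "a \<in> Mor L" "src L \<sigma> = rng L a" "\<rho> = cmp L \<sigma> a"
    using assms(1) unfolding prefix_def by auto
  have "cmp L \<mu> \<rho> = cmp L (cmp L \<mu> \<sigma>) a" using a assms cmp_assoc by auto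
  moreover have "src L (cmp L \<mu> \<sigma>) = rng L a" "cmp L \<mu> \<sigma> \<in> Mor L"
    using a assms cmp_src cmp_mor by auto
  ultimately show ?thesis using a unfolding prefix_def by auto
qed

lemma prefix_deg: "prefix x y \<Longrightarrow> deg L x i \<le> deg L y i"
  unfolding prefix_def using deg_cmp by auto

lemma prefix_of_degree:
  assumes "y \<in> Mor L" "\<forall>i. n i \<le> deg L y i"
  shows "\<exists>x. prefix x y \<and> deg L x = n"
proof -
  have "deg L y = (\<lambda>i. n i + (deg L y i - n i))" using assms(2) by (auto simp: fun_eq_iff)
  from factorisation_exists[OF assms(1) this] obtain a b where
    "a \<in> Mor L" "b \<in> Mor L" "src L a = rng L b" "cmp L a b = y" "deg L a = n" by blast
  then show ?thesis unfolding prefix_def by metis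
qed

lemma prefix_unique:
  assumes "prefix x y" "prefix x' y" "deg L x = deg L x'"
  shows "x = x'"
proof -
  obtain a where a: "x \<in> Mor L" "a \<in> Mor L" "src L x = rng L a" "y = cmp L x a"
    using assms(1) unfolding prefix_def by auto
  obtain b where b: "x' \<in> Mor L" "b \<in> Mor L" "src L x' = rng L b" "y = cmp L x' b"
    using assms(2) unfolding prefix_def by auto
  have y: "y \<in> Mor L" using assms prefix_mor_right by auto
  have dy: "deg L y = (\<lambda>i. deg L x i + deg L a i)" using a deg_cmp by auto
  have "deg L y = (\<lambda>i. deg L x' i + deg L b i)" using b deg_cmp by auto
  then have "deg L b = deg L a" using dy assms(3) by (auto simp: fun_eq_iff)
  then show ?thesis
    using factorisation_unique[OF y dy a(1-3) a(4)[symmetric] refl refl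
        b(1-3) b(4)[symmetric] assms(3)[symmetric]] by blast
qed

lemma prefix_compare:
  assumes "prefix x y" "prefix z y" "\<forall>i. deg L z i \<le> deg L x i"
  shows "prefix z x"
proof -
  obtain z' where z': "prefix z' x" "deg L z' = deg L z"
    using prefix_of_degree[of x "deg L z"] assms prefix_mor_left by blast
  have "prefix z' y" using z' assms prefix_trans by blast
  then have "z' = z" using prefix_unique assms z' by blast
  then show ?thesis using z' by simp
qed

lemma MCE_below_common_extension:
  assumes "prefix x y" "prefix x' y"
  shows "\<exists>\<rho>. \<rho> \<in> MCE L x x' \<and> prefix \<rho> y"
proof -
  define n where "n = (\<lambda>i. max (deg L x i) (deg L x' i))"
  have "\<forall>i. n i \<le> deg L y i" using assms prefix_deg unfolding n_def by auto
  then obtain \<rho> where \<rho>: "prefix \<rho> y" "deg L \<rho> = n"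
    using prefix_of_degree assms prefix_mor_right by blast
  have "prefix x \<rho>" "prefix x' \<rho>"
    using prefix_compare[OF \<rho>(1) assms(1)] prefix_compare[OF \<rho>(1) assms(2)] \<rho>(2)
    unfolding n_def by auto
  then have "\<rho> \<in> MCE L x x'" using \<rho> prefix_mor_left unfolding MCE_def n_def prefix_def by auto
  then show ?thesis using \<rho> by blast
qed

subsection \<open>Filters and the sets \<open>\<ell>\<^sub>\<mu>(S)\<close>\<close>

lemma filter_rng_mem:
  assumes "is_filter L S" "l \<in> S"
  shows "rng L l \<in> S"
proof -
  have l: "l \<in> Mor L" using assms unfolding is_filter_def by auto
  have "l \<in> extensions L (rng L l)"
    unfolding extensions_def using l rng_vertex vertex_src cmp_left_id by force
  then show ?thesis using assms l rng_mor unfolding is_filter_def by blast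
qed

lemma filter_rS:
  assumes "is_filter L S" "l \<in> S"
  shows "rS L S = rng L l"
  unfolding rS_def
proof (rule the_equality)
  have l: "l \<in> Mor L" using assms unfolding is_filter_def by auto
  show "rng L l \<in> S \<and> rng L l \<in> vertices L" using filter_rng_mem[OF assms] rng_vertex l by auto
  fix v assume v: "v \<in> S \<and> v \<in> vertices L"
  have vm: "v \<in> Mor L" using v assms unfolding is_filter_def by auto
  have "MCE L v (rng L l) \<inter> S \<noteq> {}" using assms v filter_rng_mem unfolding is_filter_def by blast
  then obtain x a b where
    a: "a \<in> Mor L" "src L v = rng L a" "x = cmp L v a" and
    b: "b \<in> Mor L" "src L (rng L l) = rng L b" "x = cmp L (rng L l) b"
    unfolding MCE_def by blast
  have "rng L x = v" using vm a cmp_rng vertex_rng v by auto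
  moreover have "rng L x = rng L l" using l b rng_mor cmp_rng rng_vertex vertex_rng by metis
  ultimately show "v = rng L l" by simp
qed

lemma ell_iff: "e \<in> ell L m S \<longleftrightarrow> (\<exists>\<sigma>\<in>S. prefix e (cmp L m \<sigma>))"
proof
  assume "e \<in> ell L m S"
  then obtain a \<sigma> where "e \<in> Mor L" "a \<in> Mor L" "src L e = rng L a" "\<sigma> \<in> S" "cmp L e a = cmp L m \<sigma>"
    unfolding ell_def extensions_def by blast
  then show "\<exists>\<sigma>\<in>S. prefix e (cmp L m \<sigma>)" unfolding prefix_def by metis
next
  assume "\<exists>\<sigma>\<in>S. prefix e (cmp L m \<sigma>)"
  then obtain a \<sigma> where "e \<in> Mor L" "a \<in> Mor L" "src L e = rng L a" "\<sigma> \<in> S" "cmp L e a = cmp L m \<sigma>"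
    unfolding prefix_def by metis
  then show "e \<in> ell L m S" unfolding ell_def extensions_def by blast
qed

text \<open>The core of the backward implication: if all \<mu>\<tau>, \<nu>\<tau> have minimal common
  extensions, then \<open>\<ell>\<^sub>\<mu>(S) \<subseteq> \<ell>\<^sub>\<nu>(S)\<close>; the reverse inclusion follows by symmetry.\<close>

lemma ell_subset:
  assumes U: "is_ultrafilter k L S" and rS: "rS L S = src L \<mu>"
    and \<mu>\<nu>: "\<mu> \<in> Mor L" "\<nu> \<in> Mor L" "src L \<mu> = src L \<nu>"
    and H: "\<forall>\<tau>\<in>Mor L. rng L \<tau> = src L \<mu> \<longrightarrow> MCE L (cmp L \<mu> \<tau>) (cmp L \<nu> \<tau>) \<noteq> {}"
  shows "ell L \<mu> S \<subseteq> ell L \<nu> S"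
proof
  fix \<eta> assume "\<eta> \<in> ell L \<mu> S"
  then obtain \<sigma> where \<sigma>: "\<sigma> \<in> S" "prefix \<eta> (cmp L \<mu> \<sigma>)" using ell_iff by blast
  have F: "is_filter L S" using U unfolding is_ultrafilter_def by auto
  have SM: "S \<subseteq> Mor L" using F unfolding is_filter_def by auto
  \<comment> \<open>enlarge \<sigma> inside S to some \<rho> with d(\<rho>) = d(\<sigma>) \<or> d(\<eta>)\<close>
  define n where "n = (\<lambda>i. max (deg L \<sigma> i) (deg L \<eta> i))"
  have "n \<in> NK k"
    using deg_NK[of \<sigma>] deg_NK[of \<eta>] \<sigma> SM prefix_mor_left unfolding NK_def n_def by auto
  then obtain \<tau> where \<tau>: "\<tau> \<in> S" "deg L \<tau> = n" using U unfolding is_ultrafilter_def by blast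
  obtain \<rho> where \<rho>: "\<rho> \<in> MCE L \<sigma> \<tau>" "\<rho> \<in> S" using F \<sigma> \<tau> unfolding is_filter_def by blast
  have deg_\<rho>: "deg L \<rho> = n" using \<rho>(1) \<tau>(2) unfolding MCE_def n_def by (auto simp: fun_eq_iff)
  have "prefix \<sigma> \<rho>" using \<rho>(1) \<sigma> SM unfolding MCE_def prefix_def by auto
  moreover have rng_\<rho>: "rng L \<rho> = src L \<mu>" using filter_rS[OF F \<rho>(2)] rS by simp
  ultimately have "prefix (cmp L \<mu> \<sigma>) (cmp L \<mu> \<rho>)"
    using prefix_cmp_left \<mu>\<nu>(1) filter_rS[OF F \<sigma>(1)] rS by simp
  \<comment> \<open>\<eta> and \<nu>\<rho> are prefixes of a common extension \<kappa> of \<mu>\<rho> and \<nu>\<rho>\<close>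
  have \<rho>_mor: "\<rho> \<in> Mor L" using \<rho> SM by auto
  obtain \<kappa> where \<kappa>: "\<kappa> \<in> MCE L (cmp L \<mu> \<rho>) (cmp L \<nu> \<rho>)" using H \<rho>_mor rng_\<rho> by blast
  have "cmp L \<mu> \<rho> \<in> Mor L" "cmp L \<nu> \<rho> \<in> Mor L" using \<mu>\<nu> \<rho>_mor rng_\<rho> cmp_mor by auto
  then have "prefix (cmp L \<mu> \<rho>) \<kappa>" and \<nu>\<rho>_\<kappa>: "prefix (cmp L \<nu> \<rho>) \<kappa>"
    using \<kappa> unfolding MCE_def prefix_def by auto
  with \<sigma>(2) \<open>prefix (cmp L \<mu> \<sigma>) (cmp L \<mu> \<rho>)\<close> have "prefix \<eta> \<kappa>" using prefix_trans by blast
  moreover have "\<forall>i. deg L \<eta> i \<le> deg L (cmp L \<nu> \<rho>) i"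
    using deg_cmp[of \<nu> \<rho>] \<mu>\<nu> \<rho>_mor rng_\<rho> deg_\<rho> unfolding n_def by auto
  ultimately have "prefix \<eta> (cmp L \<nu> \<rho>)" using prefix_compare[OF \<nu>\<rho>_\<kappa>] by simp
  then show "\<eta> \<in> ell L \<nu> S" using \<rho>(2) ell_iff by blast
qed

subsection \<open>Existence of ultrafilters\<close>

lemma ultrafilter_of_chain:
  fixes c :: "nat \<Rightarrow> 'a"
  assumes chain: "\<And>i j. i \<le> j \<Longrightarrow> prefix (c i) (c j)"
    and unbounded: "\<And>n. n \<in> NK k \<Longrightarrow> \<exists>j. \<forall>i. n i \<le> deg L (c j) i"
  shows "is_ultrafilter k L {x. \<exists>j. prefix x (c j)}"
proof -
  define S where "S = {x. \<exists>j. prefix x (c j)}"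
  have "is_filter L S" unfolding is_filter_def
  proof (intro conjI ballI impI)
    show "S \<subseteq> Mor L" unfolding S_def using prefix_mor_left by auto
    show "S \<noteq> {}" unfolding S_def using chain[OF order_refl] by blast
  next
    fix l assume l: "l \<in> Mor L" "extensions L l \<inter> S \<noteq> {}"
    then obtain a j where "a \<in> Mor L" "src L l = rng L a" "prefix (cmp L l a) (c j)"
      unfolding extensions_def S_def by blast
    then have "prefix l (c j)" using prefix_trans[OF prefix_cmp[OF l(1)]] by blast
    then show "l \<in> S" unfolding S_def by blast
  next
    fix m n assume "m \<in> S" "n \<in> S"
    then obtain i j where "prefix m (c i)" "prefix n (c j)" unfolding S_def by blast
    then have "prefix m (c (max i j))" "prefix n (c (max i j))"
      using chain prefix_trans by (metis max.cobounded1 max.cobounded2)+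
    then obtain \<rho> where "\<rho> \<in> MCE L m n" "prefix \<rho> (c (max i j))"
      using MCE_below_common_extension by blast
    then show "MCE L m n \<inter> S \<noteq> {}" unfolding S_def by blast
  qed
  moreover have "S \<inter> {l \<in> Mor L. deg L l = n} \<noteq> {}" if n: "n \<in> NK k" for n
  proof -
    obtain j where "\<forall>i. n i \<le> deg L (c j) i" using unbounded[OF n] by blast
    then obtain x where "prefix x (c j)" "deg L x = n"
      using prefix_of_degree prefix_mor_right[OF chain[OF order_refl]] by blast
    then show ?thesis unfolding S_def using prefix_mor_left by blast
  qed
  ultimately show ?thesis unfolding is_ultrafilter_def S_def by blast
qed

lemma infinite_chain:
  assumes ns: "no_sources k L" and \<tau>: "\<tau> \<in> Mor L"
  shows "\<exists>c. c 0 = \<tau> \<and> (\<forall>i j. i \<le> j \<longrightarrow> prefix (c i) (c j)) \<and>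
           (\<forall>j. c j \<in> Mor L \<and> deg L (c j) = (\<lambda>i. deg L \<tau> i + (if i < k then j else 0)))"
proof -
  define e :: "nat \<Rightarrow> nat" where "e = (\<lambda>i. if i < k then 1 else 0)"
  define step where "step = (\<lambda>x. SOME \<beta>. \<beta> \<in> vLn L (src L x) e)"
  define c where "c = rec_nat \<tau> (\<lambda>j x. cmp L x (step x))"
  have c_Suc: "c (Suc j) = cmp L (c j) (step (c j))" for j by (simp add: c_def)
  have step_edge: "step x \<in> Mor L \<and> rng L (step x) = src L x \<and> deg L (step x) = e"
    if "x \<in> Mor L" for x
  proof -
    have "e \<in> NK k" unfolding NK_def e_def by auto
    then have "vLn L (src L x) e \<noteq> {}" using ns src_vertex[OF that] unfolding no_sources_def by blast
    then have "step x \<in> vLn L (src L x) e" unfolding step_def by (metis ex_in_conv someI_ex)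
    then show ?thesis unfolding vLn_def by auto
  qed
  have c_deg: "c j \<in> Mor L \<and> deg L (c j) = (\<lambda>i. deg L \<tau> i + (if i < k then j else 0))" for j
  proof (induction j)
    case 0 then show ?case using \<tau> by (simp add: c_def)
  next
    case (Suc j)
    then show ?case using step_edge[of "c j"] c_Suc[of j] cmp_mor deg_cmp[of "c j" "step (c j)"]
      by (auto simp: e_def fun_eq_iff)
  qed
  have "prefix (c i) (c j)" if "i \<le> j" for i j
    using that
  proof (induction j rule: dec_induct)
    case base then show ?case using c_deg prefix_refl by auto
  next
    case (step j)
    have "prefix (c j) (c (Suc j))" using c_Suc[of j] prefix_cmp c_deg step_edge by metis
    then show ?case using step prefix_trans by blast
  qed
  moreover have "c 0 = \<tau>" by (simp add: c_def)
  ultimately show ?thesis using c_deg by blast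
qed

lemma exists_ultrafilter_containing:
  assumes "no_sources k L" "\<tau> \<in> Mor L"
  shows "\<exists>S. is_ultrafilter k L S \<and> \<tau> \<in> S"
proof -
  obtain c where c0: "c 0 = \<tau>" and chain: "\<forall>i j. i \<le> j \<longrightarrow> prefix (c i) (c j)"
    and c_deg: "\<forall>j. c j \<in> Mor L \<and> deg L (c j) = (\<lambda>i. deg L \<tau> i + (if i < k then j else 0))"
    using infinite_chain[OF assms] by blast
  have "\<exists>j. \<forall>i. n i \<le> deg L (c j) i" if "n \<in> NK k" for n
  proof -
    have "n i \<le> deg L (c (\<Sum>i<k. n i)) i" for i
      using that c_deg member_le_sum[of i "{..<k}" n] unfolding NK_def by (cases "i < k") auto
    then show ?thesis by blast
  qed
  then have "is_ultrafilter k L {x. \<exists>j. prefix x (c j)}"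
    using ultrafilter_of_chain chain by blast
  moreover have "\<tau> \<in> {x. \<exists>j. prefix x (c j)}" using prefix_refl[OF assms(2)] c0 by auto
  ultimately show ?thesis by blast
qed

text \<open>Forward implication: test \<mu> \<sim> \<nu> on an ultrafilter containing \<tau>.\<close>

lemma sim_imp_MCE:
  assumes ns: "no_sources k L" and \<mu>\<nu>: "\<mu> \<in> Mor L" "\<nu> \<in> Mor L" "src L \<mu> = src L \<nu>"
    and sim: "sim k L \<mu> \<nu>" and \<tau>: "\<tau> \<in> Mor L" "rng L \<tau> = src L \<mu>"
  shows "MCE L (cmp L \<mu> \<tau>) (cmp L \<nu> \<tau>) \<noteq> {}"
proof -
  obtain S where U: "is_ultrafilter k L S" and "\<tau> \<in> S"
    using exists_ultrafilter_containing[OF ns \<tau>(1)] by blast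
  have F: "is_filter L S" using U unfolding is_ultrafilter_def by auto
  have SM: "S \<subseteq> Mor L" using F unfolding is_filter_def by auto
  have rS: "rS L S = src L \<mu>" using filter_rS[OF F \<open>\<tau> \<in> S\<close>] \<tau> by simp
  have "prefix (cmp L \<mu> \<tau>) (cmp L \<mu> \<tau>)" by (rule prefix_refl[OF cmp_mor[OF \<mu>\<nu>(1) \<tau>(1) \<tau>(2)[symmetric]]])
  then have "cmp L \<mu> \<tau> \<in> ell L \<mu> S" using ell_iff \<open>\<tau> \<in> S\<close> by blast
  moreover have "ell L \<mu> S = ell L \<nu> S" using sim U rS unfolding sim_def by blast
  ultimately obtain \<sigma> where \<sigma>: "\<sigma> \<in> S" "prefix (cmp L \<mu> \<tau>) (cmp L \<nu> \<sigma>)"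
    using ell_iff by blast
  have rng_\<sigma>: "rng L \<sigma> = src L \<nu>" using filter_rS[OF F \<sigma>(1)] rS \<mu>\<nu>(3) by simp
  \<comment> \<open>a common extension \<rho> of \<sigma> and \<tau> in S\<close>
  obtain \<rho> a b where
    a: "a \<in> Mor L" "src L \<sigma> = rng L a" "\<rho> = cmp L \<sigma> a" and
    b: "b \<in> Mor L" "src L \<tau> = rng L b" "\<rho> = cmp L \<tau> b"
    using F \<sigma>(1) \<open>\<tau> \<in> S\<close> unfolding is_filter_def MCE_def by blast
  have "prefix \<sigma> \<rho>" "prefix \<tau> \<rho>"
    using prefix_cmp[OF _ a(1,2)] prefix_cmp[OF _ b(1,2)] a(3) b(3) SM \<sigma>(1) \<open>\<tau> \<in> S\<close>
    by auto
  then have "prefix (cmp L \<nu> \<sigma>) (cmp L \<nu> \<rho>)" "prefix (cmp L \<nu> \<tau>) (cmp L \<nu> \<rho>)"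
    using prefix_cmp_left \<mu>\<nu> \<tau> rng_\<sigma> by auto
  moreover have "prefix (cmp L \<mu> \<tau>) (cmp L \<nu> \<rho>)"
    using \<sigma>(2) calculation(1) prefix_trans by blast
  ultimately show ?thesis using MCE_below_common_extension by blast
qed

text \<open>Backward implication: both inclusions come from the core lemma, the
  second one after exchanging \<mu> and \<nu> (MCE is symmetric).\<close>

lemma MCE_imp_sim:
  assumes \<mu>\<nu>: "\<mu> \<in> Mor L" "\<nu> \<in> Mor L" "src L \<mu> = src L \<nu>"
    and H: "\<forall>\<tau>\<in>Mor L. rng L \<tau> = src L \<mu> \<longrightarrow> MCE L (cmp L \<mu> \<tau>) (cmp L \<nu> \<tau>) \<noteq> {}"
  shows "sim k L \<mu> \<nu>"
proof -
  have MCE_sym: "MCE L m n = MCE L n m" for m n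
  proof -
    have "(\<lambda>i. max (deg L m i) (deg L n i)) = (\<lambda>i. max (deg L n i) (deg L m i))"
      by (simp add: max.commute)
    then show ?thesis unfolding MCE_def by (simp only:) blast
  qed
  have H': "\<forall>\<tau>\<in>Mor L. rng L \<tau> = src L \<nu> \<longrightarrow> MCE L (cmp L \<nu> \<tau>) (cmp L \<mu> \<tau>) \<noteq> {}"
    using H \<mu>\<nu>(3) MCE_sym by metis
  show ?thesis unfolding sim_def
  proof (intro allI impI)
    fix S assume S: "is_ultrafilter k L S \<and> rS L S = src L \<mu>"
    show "ell L \<mu> S = ell L \<nu> S"
    proof
      show "ell L \<mu> S \<subseteq> ell L \<nu> S" using S \<mu>\<nu> H by (intro ell_subset) auto
      show "ell L \<nu> S \<subseteq> ell L \<mu> S" using S \<mu>\<nu> H' by (intro ell_subset) auto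
    qed
  qed
qed

end

theorem mainTheorem20:
  assumes "is_kgraph k L" and "row_finite k L" and "no_sources k L"
    and "\<mu> \<in> Mor L" and "\<nu> \<in> Mor L" and "src L \<mu> = src L \<nu>"
  shows "sim k L \<mu> \<nu> \<longleftrightarrow>
    (\<forall>\<tau>\<in>Mor L. rng L \<tau> = src L \<mu> \<longrightarrow> MCE L (cmp L \<mu> \<tau>) (cmp L \<nu> \<tau>) \<noteq> {})"
proof -
  interpret k_graph k L using assms(1) by unfold_locales
  show ?thesis
    using sim_imp_MCE[OF assms(3-6)] MCE_imp_sim[OF assms(4-6)] by blast
qed

end
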